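(* Let $n\ge2$ and $c\ge0$ be integers and $0\le p\le n$. If $p\ne n$ then $F_q(n-1,n,c,p;0)=G_{n-1,c,p}$, and if $p\ne0$ then $F_q(n-1,n,c,p;-n)=(-1)^{n-1}q^{-3n(n-1)/2}G_{n-1,c+2,p-1}$. Moreover $F_q(n-1,n,c,n;1)=q^{(n+2)(n-1)/2}G_{n-1,c-1,0}$ and $F_q(n-1,n,c,0;-n-1)=(-1)^{n-1}q^{-(n-1)(2n+1)}G_{n-1,c+3,n-1}$.
   Context: For integers $0\le r\le n$ and $c$, an $(r,n,c)$-pattern is an array of integers $(a_{i,j})_{1\le i\le r+1,\ i-1\le j\le n+1}$ with $a_{i,i-1}=0$, $a_{i,n+1}=c$, and for all $2\le i\le r+1$, $i-1\le j\le n$: if $a_{i,j}\le a_{i,j+1}$ then $a_{i,j}\le a_{i-1,j}\le a_{i,j+1}$, and if $a_{i,j}>a_{i,j+1}$ then $a_{i,j}>a_{i-1,j}>a_{i,j+1}$. Its norm is $\sum_{i=1}^{r+1}\sum_{j=i}^{n}a_{i,j}$. An inversion is a pair $(a_{i,j},a_{i,j+1})$ with $a_{i,j}>a_{i,j+1}$ and $i\ne1$; $\operatorname{sgn}(a)=(-1)^{\#\text{inversions}}$. $F_q(r,n,c,p;k_1,\ldots,k_{n-r})=q^{-(k_1+\cdots+k_{n-r})}\sum_a\operatorname{sgn}(a)q^{\operatorname{norm}(a)}$, summed over all $(r,n,c)$-patterns with $a_{r+1,r+i}=k_i$ for $1\le i\le n-r$ and exactly $p$ of $a_{1,1},\ldots,a_{1,n}$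 odd ($q$ an indeterminate). For $m\ge1$, $G_{m,c,p}=\sum_{k=0}^{c}F_q(m-1,m,c,p;k)\,q^k$, with the convention $\sum_{k=0}^{-1}=0$ (this is the generating function of strict plane partitions with parts in $\{1,\ldots,m\}$, at most $c$ columns and $p$ rows of odd length). *)

theory Defs
  imports Main
begin

text \<open>An (r,n,c)-pattern is encoded as a function a :: nat \<Rightarrow> nat \<Rightarrow> int,
  where a i j is the entry a_{i,j} for 1 \<le> i \<le> r+1, i-1 \<le> j \<le> n+1, and a i j = 0
  for all indices outside this range (so that patterns are uniquely determined).\<close>

definition pattern_dom :: "nat \<Rightarrow> nat \<Rightarrow> (nat \<times> nat) set" where
  "pattern_dom r n = {(i, j). 1 \<le> i \<and> i \<le> r + 1 \<and> i - 1 \<le> j \<and> j \<le> n + 1}"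

definition is_pattern :: "nat \<Rightarrow> nat \<Rightarrow> int \<Rightarrow> (nat \<Rightarrow> nat \<Rightarrow> int) \<Rightarrow> bool" where
  "is_pattern r n c a \<longleftrightarrow>
     r \<le> n \<and>
     (\<forall>i j. (i, j) \<notin> pattern_dom r n \<longrightarrow> a i j = 0) \<and>
     (\<forall>i. 1 \<le> i \<and> i \<le> r + 1 \<longrightarrow> a i (i - 1) = 0 \<and> a i (n + 1) = c) \<and>
     (\<forall>i j. 2 \<le> i \<and> i \<le> r + 1 \<and> i - 1 \<le> j \<and> j \<le> n \<longrightarrow>
        (a i j \<le> a i (j + 1) \<longrightarrow> a i j \<le> a (i - 1) j \<and> a (i - 1) j \<le> a i (j + 1)) \<and>
        (a i j > a i (j + 1) \<longrightarrow> a i j > a (i - 1) j \<and> a (i - 1) j > a i (j + 1)))"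

definition pattern_norm :: "nat \<Rightarrow> nat \<Rightarrow> (nat \<Rightarrow> nat \<Rightarrow> int) \<Rightarrow> int" where
  "pattern_norm r n a = (\<Sum>i = 1..r + 1. \<Sum>j = i..n. a i j)"

definition inversions :: "nat \<Rightarrow> nat \<Rightarrow> (nat \<Rightarrow> nat \<Rightarrow> int) \<Rightarrow> (nat \<times> nat) set" where
  "inversions r n a = {(i, j). 2 \<le> i \<and> i \<le> r + 1 \<and> i - 1 \<le> j \<and> j \<le> n \<and> a i j > a i (j + 1)}"

definition pattern_sgn :: "nat \<Rightarrow> nat \<Rightarrow> (nat \<Rightarrow> nat \<Rightarrow> int) \<Rightarrow> int" where
  "pattern_sgn r n a = (-1) ^ card (inversions r n a)"

definition patterns_with :: "nat \<Rightarrow> nat \<Rightarrow> int \<Rightarrow> nat \<Rightarrow> int list \<Rightarrow> (nat \<Rightarrow> nat \<Rightarrow> int) set" where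
  "patterns_with r n c p k = {a. is_pattern r n c a \<and>
      (\<forall>i. 1 \<le> i \<and> i \<le> n - r \<longrightarrow> a (r + 1) (r + i) = k ! (i - 1)) \<and>
      card {j \<in> {1..n}. odd (a 1 j)} = p}"

definition Fq :: "'a::field \<Rightarrow> nat \<Rightarrow> nat \<Rightarrow> int \<Rightarrow> nat \<Rightarrow> int list \<Rightarrow> 'a" where
  "Fq q r n c p k = q powi (- sum_list k) *
     (\<Sum>a\<in>patterns_with r n c p k. of_int (pattern_sgn r n a) * q powi (pattern_norm r n a))"

definition Gq :: "'a::field \<Rightarrow> nat \<Rightarrow> int \<Rightarrow> nat \<Rightarrow> 'a" where
  "Gq q m c p = (\<Sum>k\<in>{0..c}. Fq q (m - 1) m c p [k] * q powi k)"

end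

theory Submission
  imports Defs
begin

text \<open>In each of the four cases the bottom entry \<open>a n n\<close>, together with the parity condition
  when \<open>p = n\<close> or \<open>p = 0\<close>, forces the whole diagonal: since \<open>a i i\<close> interlaces with the zeros
  \<open>a i (i - 1)\<close>, the diagonal is either nonnegative and nondecreasing or negative and strictly
  decreasing. The forced diagonal \<open>D\<close> is \<open>0\<close>, \<open>-i\<close>, \<open>1\<close> or \<open>-i-1\<close>, and every entry to its right is
  at least \<open>D 2\<close>. Deleting the diagonal and subtracting \<open>D 2\<close> from the remaining entries is then a
  bijection onto the \<open>(n-2, n-1, c - D 2)\<close>-patterns with corner in \<open>[0, c - D 2]\<close>, which are
  exactly the patterns summed in \<open>Gq q (n - 1) (c - D 2)\<close>. The bijection shifts the norm by a
  constant, adds one inversion for each negative \<open>D i\<close> with \<open>i \<ge> 2\<close>, and changes the odd entries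
  of the first row according to the parities of \<open>D 1\<close> and \<open>D 2\<close>; this gives the prefactors and
  the new parity count.\<close>

section \<open>Patterns\<close>

definition interlaces :: "int \<Rightarrow> int \<Rightarrow> int \<Rightarrow> bool" where
  "interlaces x y z \<longleftrightarrow> (x \<le> y \<longrightarrow> x \<le> z \<and> z \<le> y) \<and> (y < x \<longrightarrow> y < z \<and> z < x)"

lemma interlaces_add_iff [simp]: "interlaces (x + t) (y + t) (z + t) \<longleftrightarrow> interlaces x y z"
  by (auto simp: interlaces_def)

lemma interlaces_diff_iff [simp]: "interlaces (x - t) (y - t) (z - t) \<longleftrightarrow> interlaces x y z"
  by (auto simp: interlaces_def)

lemma is_pattern_iff:
  "is_pattern r n c a \<longleftrightarrow> r \<le> n \<and> (\<forall>i j. (i, j) \<notin> pattern_dom r n \<longrightarrow> a i j = 0)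
    \<and> (\<forall>i. 1 \<le> i \<and> i \<le> r + 1 \<longrightarrow> a i (i - 1) = 0 \<and> a i (n + 1) = c)
    \<and> (\<forall>i j. 2 \<le> i \<and> i \<le> r + 1 \<and> i - 1 \<le> j \<and> j \<le> n \<longrightarrow> interlaces (a i j) (a i (j + 1)) (a (i - 1) j))"
  by (auto simp: is_pattern_def interlaces_def)

lemma is_pattern_interlaces:
  "is_pattern r n c a \<Longrightarrow> 2 \<le> i \<Longrightarrow> i \<le> r + 1 \<Longrightarrow> i - 1 \<le> j \<Longrightarrow> j \<le> n
    \<Longrightarrow> interlaces (a i j) (a i (j + 1)) (a (i - 1) j)"
  unfolding is_pattern_iff by blast

lemma is_pattern_outside: "is_pattern r n c a \<Longrightarrow> (i, j) \<notin> pattern_dom r n \<Longrightarrow> a i j = 0"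
  unfolding is_pattern_def by blast

lemma is_pattern_left: "is_pattern r n c a \<Longrightarrow> 1 \<le> i \<Longrightarrow> i \<le> r + 1 \<Longrightarrow> a i (i - 1) = 0"
  unfolding is_pattern_def by blast

lemma is_pattern_right: "is_pattern r n c a \<Longrightarrow> 1 \<le> i \<Longrightarrow> i \<le> r + 1 \<Longrightarrow> a i (n + 1) = c"
  unfolding is_pattern_def by blast

lemma pattern_entry_bound:
  assumes P: "is_pattern r n c a" and bottom: "\<And>j. \<bar>a (r + 1) j\<bar> \<le> M"
    and i: "1 \<le> i" "i \<le> r + 1"
  shows "\<bar>a i j\<bar> \<le> M"
proof -
  have M: "0 \<le> M" using bottom[of 0] by simp
  have "\<forall>j. \<bar>a i j\<bar> \<le> M" using i(2)
  proof (induction rule: inc_induct)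
    case base
    then show ?case using bottom by blast
  next
    case (step k)
    show ?case
    proof
      fix j
      consider "(k, j) \<notin> pattern_dom r n" | "j = k - 1" | "j = n + 1"
        | "k \<le> j" "j \<le> n" "(k, j) \<in> pattern_dom r n"
        by (fastforce simp: pattern_dom_def)
      then show "\<bar>a k j\<bar> \<le> M"
      proof cases
        case 1
        then show ?thesis using is_pattern_outside[OF P] M by simp
      next
        case 2
        then show ?thesis using is_pattern_left[OF P, of k] step.hyps i M by simp
      next
        case 3
        then show ?thesis
          using is_pattern_right[OF P, of k] is_pattern_right[OF P, of "r + 1"] bottom[of "n + 1"]
            step.hyps i
          by simp
      next
        case 4
        have "interlaces (a (Suc k) j) (a (Suc k) (j + 1)) (a k j)"
          using is_pattern_interlaces[OF P, of "Suc k" j] 4 step.hyps i by (simp add: pattern_dom_def)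
        then show ?thesis
          using step.IH[rule_format, of j] step.IH[rule_format, of "j + 1"]
          by (auto simp: interlaces_def split: if_splits)
      qed
    qed
  qed
  then show ?thesis by blast
qed

lemma finite_pattern_dom: "finite (pattern_dom r n)"
  by (rule finite_subset[of _ "{1..r + 1} \<times> {0..n + 1}"]) (auto simp: pattern_dom_def)

lemma finite_inversions: "finite (inversions r n a)"
  by (rule finite_subset[of _ "{0..r + 1} \<times> {0..n}"]) (auto simp: inversions_def)

lemma finite_bounded_patterns: "finite {a. is_pattern r n c a \<and> (\<forall>j. \<bar>a (r + 1) j\<bar> \<le> M)}"
proof -
  let ?F = "{f :: nat \<times> nat \<Rightarrow> int. \<forall>x. (x \<in> pattern_dom r n \<longrightarrow> f x \<in> {-M..M})
      \<and> (x \<notin> pattern_dom r n \<longrightarrow> f x = 0)}"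
  have "finite ?F" by (rule finite_set_of_finite_funs) (auto simp: finite_pattern_dom)
  moreover have "{a. is_pattern r n c a \<and> (\<forall>j. \<bar>a (r + 1) j\<bar> \<le> M)} \<subseteq> (\<lambda>f i j. f (i, j)) ` ?F"
  proof
    fix a assume "a \<in> {a. is_pattern r n c a \<and> (\<forall>j. \<bar>a (r + 1) j\<bar> \<le> M)}"
    then have P: "is_pattern r n c a" and bottom: "\<And>j. \<bar>a (r + 1) j\<bar> \<le> M" by auto
    have "\<bar>a i j\<bar> \<le> M" if "(i, j) \<in> pattern_dom r n" for i j
      using pattern_entry_bound[OF P bottom] that by (auto simp: pattern_dom_def)
    then have "(\<lambda>(i, j). a i j) \<in> ?F" using is_pattern_outside[OF P] by (fastforce simp: abs_le_iff)
    then show "a \<in> (\<lambda>f i j. f (i, j)) ` ?F" by (rule rev_image_eqI) simp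
  qed
  ultimately show ?thesis by (rule finite_surj)
qed

lemma patterns_with_singleton:
  "patterns_with r (Suc r) c p [k] =
    {a. is_pattern r (Suc r) c a \<and> a (Suc r) (Suc r) = k \<and> card {j \<in> {1..Suc r}. odd (a 1 j)} = p}"
  by (auto simp: patterns_with_def)

lemma finite_patterns_with_singleton: "finite (patterns_with r (Suc r) c p [k])"
proof (rule finite_subset[OF _ finite_bounded_patterns])
  show "patterns_with r (Suc r) c p [k] \<subseteq>
      {a. is_pattern r (Suc r) c a \<and> (\<forall>j. \<bar>a (r + 1) j\<bar> \<le> max \<bar>k\<bar> \<bar>c\<bar>)}"
  proof (clarsimp simp: patterns_with_singleton)
    fix a j assume P: "is_pattern r (Suc r) c a"
    consider "j = r" | "j = Suc r" | "j = Suc (Suc r)" | "(Suc r, j) \<notin> pattern_dom r (Suc r)"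
      by (fastforce simp: pattern_dom_def)
    then show "\<bar>a (Suc r) j\<bar> \<le> max \<bar>a (Suc r) (Suc r)\<bar> \<bar>c\<bar>"
      using is_pattern_left[OF P, of "Suc r"] is_pattern_right[OF P, of "Suc r"] is_pattern_outside[OF P]
      by cases auto
  qed
qed

definition pattern_weight :: "'a::field \<Rightarrow> nat \<Rightarrow> nat \<Rightarrow> (nat \<Rightarrow> nat \<Rightarrow> int) \<Rightarrow> 'a" where
  "pattern_weight q r n a = of_int (pattern_sgn r n a) * q powi pattern_norm r n a"

definition bottom_bounded_patterns :: "nat \<Rightarrow> int \<Rightarrow> (nat \<Rightarrow> nat \<Rightarrow> int) set" where
  "bottom_bounded_patterns r c =
    {b. is_pattern r (Suc r) c b \<and> 0 \<le> b (Suc r) (Suc r) \<and> b (Suc r) (Suc r) \<le> c}"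

lemma Fq_singleton:
  "Fq q r (Suc r) c p [k] =
    q powi (- k) * sum (pattern_weight q r (Suc r)) (patterns_with r (Suc r) c p [k])"
  by (simp add: Fq_def pattern_weight_def)

lemma Gq_Suc_eq_sum_bottom_bounded:
  fixes q :: "'a::field"
  assumes "q \<noteq> 0"
  shows "Gq q (Suc r) c p = sum (pattern_weight q r (Suc r))
    {b \<in> bottom_bounded_patterns r c. card {j \<in> {1..Suc r}. odd (b 1 j)} = p}"
proof -
  have "Fq q r (Suc r) c p [k] * q powi k =
      sum (pattern_weight q r (Suc r)) (patterns_with r (Suc r) c p [k])" for k
  proof -
    have "q powi (- k) * q powi k = 1"
      using assms by (simp flip: power_int_add)
    then show ?thesis unfolding Fq_singleton by (metis mult.commute mult.left_commute mult_1_right)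
  qed
  then have "Gq q (Suc r) c p =
      (\<Sum>k\<in>{0..c}. sum (pattern_weight q r (Suc r)) (patterns_with r (Suc r) c p [k]))"
    unfolding Gq_def by simp
  also have "\<dots> = sum (pattern_weight q r (Suc r)) (\<Union>k\<in>{0..c}. patterns_with r (Suc r) c p [k])"
    by (rule sum.UNION_disjoint[symmetric])
      (simp_all add: finite_patterns_with_singleton, auto simp: patterns_with_singleton)
  also have "(\<Union>k\<in>{0..c}. patterns_with r (Suc r) c p [k]) =
      {b \<in> bottom_bounded_patterns r c. card {j \<in> {1..Suc r}. odd (b 1 j)} = p}"
    by (auto simp: patterns_with_singleton bottom_bounded_patterns_def)
  finally show ?thesis .
qed

section \<open>The diagonal of an \<open>(n-1,n)\<close>-pattern\<close>

lemma diagonal_interlaces: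
  assumes P: "is_pattern (n - 1) n c a" and "1 \<le> i" "i < n"
  shows "interlaces 0 (a (Suc i) (Suc i)) (a i i)"
proof -
  have "interlaces (a (Suc i) i) (a (Suc i) (i + 1)) (a (Suc i - 1) i)"
    by (rule is_pattern_interlaces[OF P]) (use assms in auto)
  moreover have "a (Suc i) (Suc i - 1) = 0"
    by (rule is_pattern_left[OF P]) (use assms in auto)
  ultimately show ?thesis by simp
qed

lemma superdiagonal_interlaces:
  assumes P: "is_pattern (n - 1) n c a" and "1 \<le> i" "i < n"
  shows "interlaces (a (Suc i) (Suc i)) (a (Suc i) (Suc (Suc i))) (a i (Suc i))"
proof -
  have "interlaces (a (Suc i) (Suc i)) (a (Suc i) (Suc i + 1)) (a (Suc i - 1) (Suc i))"
    by (rule is_pattern_interlaces[OF P]) (use assms in auto)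
  then show ?thesis by simp
qed

lemma diagonal_nonneg_mono:
  assumes P: "is_pattern (n - 1) n c a" and nonneg: "0 \<le> a n n" and "1 \<le> i" "i \<le> j" "j \<le> n"
  shows "0 \<le> a i i \<and> a i i \<le> a j j"
proof -
  have "i \<le> n" using assms by simp
  then have "\<forall>j. i \<le> j \<and> j \<le> n \<longrightarrow> 0 \<le> a i i \<and> a i i \<le> a j j" using \<open>1 \<le> i\<close>
  proof (induction rule: inc_induct)
    case base
    then show ?case using nonneg by auto
  next
    case (step i)
    have IH: "0 \<le> a (Suc i) (Suc i)" "\<And>j. Suc i \<le> j \<Longrightarrow> j \<le> n \<Longrightarrow> a (Suc i) (Suc i) \<le> a j j"
      using step by auto
    moreover have "interlaces 0 (a (Suc i) (Suc i)) (a i i)"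
      using diagonal_interlaces[OF P] step by simp
    ultimately have nonneg: "0 \<le> a i i" and rise: "a i i \<le> a (Suc i) (Suc i)"
      by (auto simp: interlaces_def)
    show ?case
    proof (intro allI impI)
      fix j assume "i \<le> j \<and> j \<le> n"
      then consider "j = i" | "Suc i \<le> j" "j \<le> n" by linarith
      then show "0 \<le> a i i \<and> a i i \<le> a j j"
        by cases (use IH(2) nonneg rise in force)+
    qed
  qed
  then show ?thesis using assms by blast
qed

lemma diagonal_neg_decreasing:
  assumes P: "is_pattern (n - 1) n c a" and neg: "a n n < 0" and "1 \<le> i" "i \<le> j" "j \<le> n"
  shows "a i i < 0 \<and> a j j + int (j - i) \<le> a i i"
proof -
  have "i \<le> n" using assms by simp
  then have "\<forall>j. i \<le> j \<and> j \<le> n \<longrightarrow> a i i < 0 \<and> a j j + int (j - i) \<le> a i i" using \<open>1 \<le> i\<close>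
  proof (induction rule: inc_induct)
    case base
    then show ?case using neg by auto
  next
    case (step i)
    have IH: "a (Suc i) (Suc i) < 0"
      "\<And>j. Suc i \<le> j \<Longrightarrow> j \<le> n \<Longrightarrow> a j j + int (j - Suc i) \<le> a (Suc i) (Suc i)"
      using step by auto
    moreover have "interlaces 0 (a (Suc i) (Suc i)) (a i i)"
      using diagonal_interlaces[OF P] step by simp
    ultimately have neg: "a i i < 0" and drop: "a (Suc i) (Suc i) + 1 \<le> a i i"
      by (auto simp: interlaces_def)
    show ?case
    proof (intro allI impI)
      fix j assume "i \<le> j \<and> j \<le> n"
      then consider "j = i" | "Suc i \<le> j" "j \<le> n" by linarith
      then show "a i i < 0 \<and> a j j + int (j - i) \<le> a i i"
        by cases (use IH(2) neg drop in force)+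
    qed
  qed
  then show ?thesis using assms by blast
qed

lemma superdiagonal_ge_diagonal:
  assumes P: "is_pattern (n - 1) n c a"
    and drop: "\<And>i. 2 \<le> i \<Longrightarrow> i < n \<Longrightarrow> a i i \<le> a (Suc i) (Suc i) + 1"
    and last: "a n n \<le> c + 1"
    and "1 \<le> i" "i < n"
  shows "a (Suc i) (Suc i) \<le> a i (Suc i)"
proof -
  have "i \<le> n - 1" using assms by simp
  then show ?thesis using \<open>1 \<le> i\<close>
  proof (induction rule: inc_induct)
    case base
    have "interlaces (a n n) (a n (n + 1)) (a (n - 1) n)"
      using superdiagonal_interlaces[OF P, of "n - 1"] assms by simp
    moreover have "a n (n + 1) = c" using is_pattern_right[OF P, of n] assms by simp
    ultimately show ?case using last assms by (auto simp: interlaces_def)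
  next
    case (step i)
    have "interlaces (a (Suc i) (Suc i)) (a (Suc i) (Suc (Suc i))) (a i (Suc i))"
      using superdiagonal_interlaces[OF P, of i] step by simp
    moreover have "a (Suc i) (Suc i) \<le> a (Suc (Suc i)) (Suc (Suc i)) + 1"
      using drop[of "Suc i"] step by simp
    ultimately show ?case using step by (auto simp: interlaces_def)
  qed
qed

lemma superdiagonal_ge_second_diagonal:
  assumes P: "is_pattern (n - 1) n c a"
    and drop: "\<And>i. 2 \<le> i \<Longrightarrow> i < n \<Longrightarrow> a i i \<le> a (Suc i) (Suc i) + 1"
    and last: "a n n \<le> c + 1"
    and "1 \<le> i" "i < n"
  shows "a 2 2 \<le> a i (Suc i)"
  using \<open>1 \<le> i\<close> \<open>i < n\<close>
proof (induction rule: dec_induct)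
  case base
  then show ?case using superdiagonal_ge_diagonal[OF P drop last, of 1] by (simp add: numeral_2_eq_2)
next
  case (step i)
  \<comment> \<open>\<open>a i (Suc i)\<close> is not below the diagonal, so interlacing makes the superdiagonal nondecreasing\<close>
  have "interlaces (a (Suc i) (Suc i)) (a (Suc i) (Suc (Suc i))) (a i (Suc i))"
    using superdiagonal_interlaces[OF P, of i] step by simp
  moreover have "a (Suc i) (Suc i) \<le> a i (Suc i)"
    using superdiagonal_ge_diagonal[OF P drop last, of i] step by simp
  ultimately have "a i (Suc i) \<le> a (Suc i) (Suc (Suc i))" by (auto simp: interlaces_def)
  then show ?case using step by simp
qed

section \<open>Removing a prescribed diagonal\<close>

definition diagonal_patterns :: "(nat \<Rightarrow> int) \<Rightarrow> int \<Rightarrow> nat \<Rightarrow> (nat \<Rightarrow> nat \<Rightarrow> int) set" where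
  "diagonal_patterns D c n = {a. is_pattern (n - 1) n c a \<and> (\<forall>i. 1 \<le> i \<and> i \<le> n \<longrightarrow> a i i = D i)}"

definition attach_diagonal :: "(nat \<Rightarrow> int) \<Rightarrow> int \<Rightarrow> nat \<Rightarrow> (nat \<Rightarrow> nat \<Rightarrow> int) \<Rightarrow> nat \<Rightarrow> nat \<Rightarrow> int" where
  "attach_diagonal D c n b i j =
    (if (i, j) \<notin> pattern_dom (n - 1) n \<or> j = i - 1 then 0
     else if j = i then D i else if j = n + 1 then c else b i (j - 1) + D 2)"

definition strip_diagonal :: "int \<Rightarrow> nat \<Rightarrow> (nat \<Rightarrow> nat \<Rightarrow> int) \<Rightarrow> nat \<Rightarrow> nat \<Rightarrow> int" where
  "strip_diagonal t n a i j =
    (if (i, j) \<notin> pattern_dom (n - 2) (n - 1) \<or> j = i - 1 then 0 else a i (j + 1) - t)"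

lemma attach_diagonal_outside: "(i, j) \<notin> pattern_dom (n - 1) n \<Longrightarrow> attach_diagonal D c n b i j = 0"
  by (simp add: attach_diagonal_def)

lemma attach_diagonal_left: "1 \<le> i \<Longrightarrow> i \<le> n \<Longrightarrow> attach_diagonal D c n b i (i - 1) = 0"
  by (simp add: attach_diagonal_def)

lemma attach_diagonal_diagonal: "1 \<le> i \<Longrightarrow> i \<le> n \<Longrightarrow> attach_diagonal D c n b i i = D i"
  by (auto simp: attach_diagonal_def pattern_dom_def)

lemma attach_diagonal_right: "1 \<le> i \<Longrightarrow> i \<le> n \<Longrightarrow> attach_diagonal D c n b i (Suc n) = c"
  by (auto simp: attach_diagonal_def pattern_dom_def)

lemma attach_diagonal_above:
  "1 \<le> i \<Longrightarrow> i < j \<Longrightarrow> j \<le> n \<Longrightarrow> attach_diagonal D c n b i j = b i (j - 1) + D 2"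
  by (auto simp: attach_diagonal_def pattern_dom_def)

lemma strip_diagonal_outside: "(i, j) \<notin> pattern_dom (n - 2) (n - 1) \<Longrightarrow> strip_diagonal t n a i j = 0"
  by (simp add: strip_diagonal_def)

lemma strip_diagonal_left: "1 \<le> i \<Longrightarrow> i \<le> n - 1 \<Longrightarrow> strip_diagonal t n a i (i - 1) = 0"
  by (simp add: strip_diagonal_def)

lemma strip_diagonal_above:
  "2 \<le> n \<Longrightarrow> 1 \<le> i \<Longrightarrow> i \<le> n - 1 \<Longrightarrow> i \<le> j \<Longrightarrow> j \<le> n \<Longrightarrow> strip_diagonal t n a i j = a i (j + 1) - t"
  by (auto simp: strip_diagonal_def pattern_dom_def)

lemma bottom_bounded_diagonal_nonneg:
  "b \<in> bottom_bounded_patterns r c \<Longrightarrow> 1 \<le> i \<Longrightarrow> i \<le> Suc r \<Longrightarrow> 0 \<le> b i i"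
  using diagonal_nonneg_mono[of "Suc r" c b i "Suc r"] by (simp add: bottom_bounded_patterns_def)

text \<open>The last three assumptions make every entry right of the diagonal at least \<open>D 2\<close>
  (\<open>superdiagonal_ge\<close>), so that stripping lands in patterns with nonnegative corner.\<close>

locale diagonal_strip =
  fixes D :: "nat \<Rightarrow> int" and c :: int and n :: nat
  assumes two_le_n: "2 \<le> n"
    and prescribed_interlaces: "\<And>i. 2 \<le> i \<Longrightarrow> i \<le> n \<Longrightarrow> interlaces 0 (D i) (D (i - 1))"
    and prescribed_le_second: "\<And>i. 2 \<le> i \<Longrightarrow> i \<le> n \<Longrightarrow> D i \<le> D 2"
    and prescribed_drop: "\<And>i. 2 \<le> i \<Longrightarrow> i < n \<Longrightarrow> D i \<le> D (Suc i) + 1"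
    and prescribed_last: "D n \<le> c + 1"
begin

abbreviation attach :: "(nat \<Rightarrow> nat \<Rightarrow> int) \<Rightarrow> nat \<Rightarrow> nat \<Rightarrow> int" where
  "attach \<equiv> attach_diagonal D c n"

abbreviation strip :: "(nat \<Rightarrow> nat \<Rightarrow> int) \<Rightarrow> nat \<Rightarrow> nat \<Rightarrow> int" where
  "strip \<equiv> strip_diagonal (D 2) n"

abbreviation stripped_patterns :: "(nat \<Rightarrow> nat \<Rightarrow> int) set" where
  "stripped_patterns \<equiv> bottom_bounded_patterns (n - 2) (c - D 2)"

lemma index_arith [simp]: "Suc (n - 2) = n - 1" "Suc (n - 1) = n" "n - 1 - 1 = n - 2"
  using two_le_n by auto

lemma stripped_is_pattern: "b \<in> stripped_patterns \<Longrightarrow> is_pattern (n - 2) (n - 1) (c - D 2) b"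
  by (simp add: bottom_bounded_patterns_def)

lemma stripped_right: "b \<in> stripped_patterns \<Longrightarrow> 1 \<le> i \<Longrightarrow> i < n \<Longrightarrow> b i n = c - D 2"
  using is_pattern_right[OF stripped_is_pattern, of b i] by simp

lemma attach_shifted:
  assumes "b \<in> stripped_patterns" "1 \<le> i" "i \<le> j" "j \<le> n" "i < n"
  shows "attach b i (Suc j) = b i j + D 2"
proof (cases "j = n")
  case True
  then show ?thesis using assms stripped_right[of b i] by (simp add: attach_diagonal_right)
next
  case False
  then show ?thesis using assms by (simp add: attach_diagonal_above)
qed

lemma attach_interlaces:
  assumes b: "b \<in> stripped_patterns" and ij: "2 \<le> i" "i \<le> n" "i - 1 \<le> j" "j \<le> n"
  shows "interlaces (attach b i j) (attach b i (j + 1)) (attach b (i - 1) j)"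
proof -
  have P: "is_pattern (n - 1 - 1) (n - 1) (c - D 2) b"
    unfolding index_arith by (rule stripped_is_pattern[OF b])
  consider "j = i - 1" | "j = i" "i = n" | "j = i" "i < n" | "i < j" using ij by linarith
  then show ?thesis
  proof cases
    case 1
    then show ?thesis
      using ij prescribed_interlaces[of i] attach_diagonal_left[of i n D c b]
      by (simp add: attach_diagonal_diagonal)
  next
    case 2
    have "0 \<le> b (n - 1) (n - 1)" "b (n - 1) (n - 1) \<le> c - D 2"
      using b by (auto simp: bottom_bounded_patterns_def)
    then show ?thesis
      using 2 ij prescribed_le_second[of n]
      by (simp add: attach_diagonal_diagonal attach_diagonal_right attach_diagonal_above interlaces_def)
  next
    case 3
    have "interlaces 0 (b i i) (b (i - 1) (i - 1))"
      using diagonal_interlaces[OF P, of "i - 1"] ij 3 by simp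
    moreover have "0 \<le> b i i" using bottom_bounded_diagonal_nonneg[OF b, of i] ij 3 by simp
    ultimately show ?thesis
      using ij 3 prescribed_le_second[of i]
      by (simp add: attach_diagonal_diagonal attach_diagonal_above interlaces_def)
  next
    case 4
    have "interlaces (b i (j - 1)) (b i (j - 1 + 1)) (b (i - 1) (j - 1))"
      by (rule is_pattern_interlaces[OF P]) (use ij 4 in auto)
    then show ?thesis
      using ij 4 attach_shifted[OF b, of i "j - 1"] attach_shifted[OF b, of "i - 1" "j - 1"]
        attach_shifted[OF b, of i j]
      by simp
  qed
qed

lemma attach_mem:
  assumes b: "b \<in> stripped_patterns"
  shows "attach b \<in> diagonal_patterns D c n"
proof -
  have "is_pattern (n - 1) n c (attach b)"
    unfolding is_pattern_iff
  proof (intro conjI allI impI)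
    fix i assume "1 \<le> i \<and> i \<le> n - 1 + 1"
    then show "attach b i (i - 1) = 0" "attach b i (n + 1) = c"
      using attach_diagonal_left[of i n D c b] attach_diagonal_right[of i n D c b] two_le_n by simp_all
  qed (use attach_interlaces[OF b] attach_diagonal_outside in auto)
  then show ?thesis by (simp add: diagonal_patterns_def attach_diagonal_diagonal)
qed

lemma superdiagonal_ge:
  assumes a: "a \<in> diagonal_patterns D c n" and "1 \<le> i" "i < n"
  shows "D 2 \<le> a i (Suc i)"
proof -
  have P: "is_pattern (n - 1) n c a" and diag: "\<And>i. 1 \<le> i \<Longrightarrow> i \<le> n \<Longrightarrow> a i i = D i"
    using a by (auto simp: diagonal_patterns_def)
  have "a 2 2 \<le> a i (Suc i)"
    by (rule superdiagonal_ge_second_diagonal[OF P])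
      (use assms diag prescribed_drop prescribed_last two_le_n in auto)
  then show ?thesis using diag[of 2] two_le_n by simp
qed

lemma strip_interlaces:
  assumes a: "a \<in> diagonal_patterns D c n" and ij: "2 \<le> i" "i \<le> n - 1" "i - 1 \<le> j" "j \<le> n - 1"
  shows "interlaces (strip a i j) (strip a i (j + 1)) (strip a (i - 1) j)"
proof -
  have P: "is_pattern (n - 1) n c a" and diag: "\<And>i. 1 \<le> i \<Longrightarrow> i \<le> n \<Longrightarrow> a i i = D i"
    using a by (auto simp: diagonal_patterns_def)
  show ?thesis
  proof (cases "j = i - 1")
    case True
    have "interlaces (a i i) (a i (i + 1)) (a (i - 1) i)"
      using is_pattern_interlaces[OF P, of i i] ij by simp
    moreover have "D 2 \<le> a i (Suc i)" "D 2 \<le> a (i - 1) i"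
      using superdiagonal_ge[OF a, of i] superdiagonal_ge[OF a, of "i - 1"] ij by simp_all
    moreover have "a i i = D i" "D i \<le> D 2"
      using diag[of i] prescribed_le_second[of i] ij by auto
    ultimately show ?thesis
      using True ij strip_diagonal_left[of i n "D 2" a]
      by (simp add: strip_diagonal_above two_le_n interlaces_def)
  next
    case False
    have "interlaces (a i (j + 1)) (a i (j + 1 + 1)) (a (i - 1) (j + 1))"
      by (rule is_pattern_interlaces[OF P]) (use ij in auto)
    then show ?thesis
      using False ij by (simp add: strip_diagonal_above two_le_n)
  qed
qed

lemma strip_mem:
  assumes a: "a \<in> diagonal_patterns D c n"
  shows "strip a \<in> stripped_patterns"
proof -
  have P: "is_pattern (n - 1) n c a" and diag: "\<And>i. 1 \<le> i \<Longrightarrow> i \<le> n \<Longrightarrow> a i i = D i"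
    using a by (auto simp: diagonal_patterns_def)
  have "is_pattern (n - 2) (n - 1) (c - D 2) (strip a)"
    unfolding is_pattern_iff
  proof (intro conjI allI impI)
    fix i assume i: "1 \<le> i \<and> i \<le> n - 2 + 1"
    then show "strip a i (i - 1) = 0"
      using strip_diagonal_left[of i n "D 2" a] two_le_n by simp
    have "a i (n + 1) = c" using is_pattern_right[OF P, of i] i by simp
    then show "strip a i (n - 1 + 1) = c - D 2"
      using i two_le_n strip_diagonal_above[of n i n "D 2" a] by auto
  qed (use strip_interlaces[OF a] strip_diagonal_outside two_le_n in auto)
  moreover have "0 \<le> strip a (n - 1) (n - 1)" "strip a (n - 1) (n - 1) \<le> c - D 2"
  proof -
    have "strip a (n - 1) (n - 1) = a (n - 1) n - D 2"
      using two_le_n by (simp add: strip_diagonal_above)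
    moreover have "D 2 \<le> a (n - 1) n"
      using superdiagonal_ge[OF a, of "n - 1"] two_le_n by simp
    moreover have "interlaces (D n) c (a (n - 1) n)"
      using superdiagonal_interlaces[OF P, of "n - 1"] diag[of n] is_pattern_right[OF P, of n] two_le_n
      by simp
    ultimately show "0 \<le> strip a (n - 1) (n - 1)" "strip a (n - 1) (n - 1) \<le> c - D 2"
      using prescribed_le_second[of n] two_le_n by (auto simp: interlaces_def)
  qed
  ultimately show ?thesis by (simp add: bottom_bounded_patterns_def)
qed

lemma attach_strip:
  assumes a: "a \<in> diagonal_patterns D c n"
  shows "attach (strip a) = a"
proof (intro ext)
  fix i j
  have P: "is_pattern (n - 1) n c a" and diag: "\<And>i. 1 \<le> i \<Longrightarrow> i \<le> n \<Longrightarrow> a i i = D i"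
    using a by (auto simp: diagonal_patterns_def)
  show "attach (strip a) i j = a i j"
  proof (cases "(i, j) \<in> pattern_dom (n - 1) n")
    case False
    then show ?thesis using is_pattern_outside[OF P] by (simp add: attach_diagonal_outside)
  next
    case True
    then have ij: "1 \<le> i" "i \<le> n" "i - 1 \<le> j" "j \<le> n + 1" using two_le_n by (auto simp: pattern_dom_def)
    consider "j = i - 1" | "j = i" | "j = n + 1" | "i < j" "j \<le> n" using ij by linarith
    then show ?thesis
    proof cases
      case 1
      then show ?thesis using is_pattern_left[OF P, of i] attach_diagonal_left[of i n D c] ij by simp
    next
      case 2
      then show ?thesis using diag[of i] ij by (simp add: attach_diagonal_diagonal)
    next
      case 3
      then show ?thesis using is_pattern_right[OF P, of i] ij by (simp add: attach_diagonal_right)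
    next
      case 4
      then show ?thesis using ij two_le_n by (simp add: attach_diagonal_above strip_diagonal_above)
    qed
  qed
qed

lemma strip_attach:
  assumes b: "b \<in> stripped_patterns"
  shows "strip (attach b) = b"
proof (intro ext)
  fix i j
  have P: "is_pattern (n - 2) (n - 1) (c - D 2) b" by (rule stripped_is_pattern[OF b])
  show "strip (attach b) i j = b i j"
  proof (cases "(i, j) \<in> pattern_dom (n - 2) (n - 1)")
    case False
    then show ?thesis using is_pattern_outside[OF P] by (simp add: strip_diagonal_outside)
  next
    case True
    then have ij: "1 \<le> i" "i \<le> n - 1" "i - 1 \<le> j" "j \<le> n" using two_le_n by (auto simp: pattern_dom_def)
    show ?thesis
    proof (cases "j = i - 1")
      case True
      then show ?thesis
        using is_pattern_left[OF P, of i] strip_diagonal_left[of i n "D 2"] ij two_le_n by simp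
    next
      case False
      then show ?thesis using ij two_le_n attach_shifted[OF b, of i j] by (simp add: strip_diagonal_above)
    qed
  qed
qed

lemma sum_diagonal_patterns_eq:
  "(\<Sum>a\<in>{a \<in> diagonal_patterns D c n. Q a}. f a) = (\<Sum>b\<in>{b \<in> stripped_patterns. Q (attach b)}. f (attach b))"
  by (rule sum.reindex_bij_witness[of _ attach strip])
    (auto simp: attach_strip strip_attach attach_mem strip_mem)

lemma inversions_attach_subset:
  assumes b: "b \<in> stripped_patterns"
  shows "inversions (n - 1) n (attach b) \<subseteq>
    (\<lambda>i. (i, i - 1)) ` {i \<in> {2..n}. D i < 0} \<union> (\<lambda>(i, j). (i, Suc j)) ` inversions (n - 2) (n - 1) b"
    (is "_ \<subseteq> ?U")
proof
  fix x assume "x \<in> inversions (n - 1) n (attach b)"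
  then obtain i j where x: "x = (i, j)" and ij: "2 \<le> i" "i \<le> n" "i - 1 \<le> j" "j \<le> n"
    and inv: "attach b i (j + 1) < attach b i j"
    using two_le_n by (auto simp: inversions_def)
  consider "j = i - 1" | "j = i" | "i < j" using ij by linarith
  then show "x \<in> ?U"
  proof cases
    case 1
    then have "D i < 0"
      using inv ij attach_diagonal_left[of i n D c b] by (simp add: attach_diagonal_diagonal)
    then show ?thesis using x 1 ij by auto
  next
    case 2
    \<comment> \<open>impossible: the entries right of the diagonal are at least \<open>D 2\<close>\<close>
    have "D i \<le> D 2" using prescribed_le_second[of i] ij by simp
    moreover have "D 2 \<le> attach b i (j + 1)"
      using bottom_bounded_diagonal_nonneg[OF b, of i] attach_shifted[OF b, of i i] ij 2 two_le_n
        b attach_diagonal_right[of n n D c b] prescribed_le_second[of n]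
      by (cases "i = n") (auto simp: bottom_bounded_patterns_def)
    ultimately show ?thesis using inv 2 ij by (simp add: attach_diagonal_diagonal)
  next
    case 3
    have "(i, j - 1) \<in> inversions (n - 2) (n - 1) b"
      using inv ij 3 two_le_n attach_shifted[OF b, of i "j - 1"] attach_shifted[OF b, of i j]
      by (auto simp: inversions_def)
    moreover have "x = (\<lambda>(i, j). (i, Suc j)) (i, j - 1)" using x 3 by simp
    ultimately show ?thesis by blast
  qed
qed

lemma inversions_attach_supset:
  assumes b: "b \<in> stripped_patterns"
  shows "(\<lambda>i. (i, i - 1)) ` {i \<in> {2..n}. D i < 0} \<union> (\<lambda>(i, j). (i, Suc j)) ` inversions (n - 2) (n - 1) b
    \<subseteq> inversions (n - 1) n (attach b)"
proof (intro Un_least subsetI)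
  fix x assume "x \<in> (\<lambda>i. (i, i - 1)) ` {i \<in> {2..n}. D i < 0}"
  then obtain i where "x = (i, i - 1)" "2 \<le> i" "i \<le> n" "D i < 0" by auto
  then show "x \<in> inversions (n - 1) n (attach b)"
    using attach_diagonal_left[of i n D c b] by (auto simp: inversions_def attach_diagonal_diagonal)
next
  fix x assume "x \<in> (\<lambda>(i, j). (i, Suc j)) ` inversions (n - 2) (n - 1) b"
  then obtain i j where x: "x = (i, Suc j)" and "(i, j) \<in> inversions (n - 2) (n - 1) b" by auto
  then have ij: "2 \<le> i" "i \<le> n - 1" "i - 1 \<le> j" "j \<le> n - 1" and inv: "b i (j + 1) < b i j"
    using two_le_n by (auto simp: inversions_def)
  have "j \<noteq> i - 1"
  proof
    assume "j = i - 1"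
    then have "b i j = 0" "0 \<le> b i (j + 1)"
      using is_pattern_left[OF stripped_is_pattern[OF b], of i]
        bottom_bounded_diagonal_nonneg[OF b, of i] ij
      by auto
    then show False using inv by simp
  qed
  then have "i \<le> j" using ij by linarith
  then show "x \<in> inversions (n - 1) n (attach b)"
    using x ij inv two_le_n attach_shifted[OF b, of i j] attach_shifted[OF b, of i "Suc j"]
    by (auto simp: inversions_def)
qed

lemma card_inversions_attach:
  assumes b: "b \<in> stripped_patterns"
  shows "card (inversions (n - 1) n (attach b)) =
    card {i \<in> {2..n}. D i < 0} + card (inversions (n - 2) (n - 1) b)"
proof -
  let ?X = "(\<lambda>i. (i, i - 1)) ` {i \<in> {2..n}. D i < 0}"
    and ?Y = "(\<lambda>(i, j). (i, Suc j)) ` inversions (n - 2) (n - 1) b"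
  have "inversions (n - 1) n (attach b) = ?X \<union> ?Y"
    using inversions_attach_subset[OF b] inversions_attach_supset[OF b] by (rule equalityI)
  moreover have "card (?X \<union> ?Y) = card ?X + card ?Y"
    by (rule card_Un_disjoint) (simp_all add: finite_inversions, force simp: inversions_def)
  moreover have "card ?X = card {i \<in> {2..n}. D i < 0}" "card ?Y = card (inversions (n - 2) (n - 1) b)"
    by (force intro: card_image simp: inj_on_def)+
  ultimately show ?thesis by simp
qed

lemma row_sum_attach:
  assumes "1 \<le> i" "i \<le> n"
  shows "(\<Sum>j = i..n. attach b i j) = D i + (\<Sum>j = i..n - 1. b i j) + D 2 * int (n - i)"
proof -
  have "(\<Sum>j = i..n. attach b i j) = attach b i i + (\<Sum>j = Suc i..Suc (n - 1). attach b i j)"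
    using assms by (simp add: sum.atLeast_Suc_atMost)
  also have "(\<Sum>j = Suc i..Suc (n - 1). attach b i j) = (\<Sum>j = i..n - 1. attach b i (Suc j))"
    by (rule sum.shift_bounds_cl_Suc_ivl)
  also have "\<dots> = (\<Sum>j = i..n - 1. b i j + D 2)"
    by (rule sum.cong) (use assms two_le_n in \<open>auto simp: attach_diagonal_above\<close>)
  also have "\<dots> = (\<Sum>j = i..n - 1. b i j) + D 2 * int (n - i)"
    using assms by (simp add: sum.distrib)
  finally show ?thesis using assms by (simp add: attach_diagonal_diagonal)
qed

lemma pattern_norm_attach:
  "pattern_norm (n - 1) n (attach b) =
    pattern_norm (n - 2) (n - 1) b + (\<Sum>i = 1..n. D i + D 2 * int (n - i))"
proof -
  have "pattern_norm (n - 1) n (attach b) = (\<Sum>i = 1..n. D i + (\<Sum>j = i..n - 1. b i j) + D 2 * int (n - i))"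
    unfolding pattern_norm_def using two_le_n by (intro sum.cong) (auto simp: row_sum_attach)
  also have "\<dots> = (\<Sum>i = 1..n. \<Sum>j = i..n - 1. b i j) + (\<Sum>i = 1..n. D i + D 2 * int (n - i))"
    unfolding sum.distrib by linarith
  also have "(\<Sum>i = 1..n. \<Sum>j = i..n - 1. b i j) = (\<Sum>i = 1..n - 1. \<Sum>j = i..n - 1. b i j)"
  proof -
    have "{1..n} = insert n {1..n - 1}" using two_le_n by auto
    then show ?thesis using two_le_n by simp
  qed
  also have "\<dots> = pattern_norm (n - 2) (n - 1) b"
    unfolding pattern_norm_def by simp
  finally show ?thesis .
qed

lemma card_odd_attach:
  "card {j \<in> {1..n}. odd (attach b 1 j)} =
    (if odd (D 1) then 1 else 0) + card {j \<in> {1..n - 1}. odd (b 1 j + D 2)}"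
proof -
  let ?L = "{j \<in> {1::nat}. odd (D 1)}" and ?R = "Suc ` {j \<in> {1..n - 1}. odd (b 1 j + D 2)}"
  have "{j \<in> {1..n}. odd (attach b 1 j)} = ?L \<union> ?R"
  proof (intro equalityI subsetI)
    fix j assume j: "j \<in> {j \<in> {1..n}. odd (attach b 1 j)}"
    show "j \<in> ?L \<union> ?R"
    proof (cases "j = 1")
      case True
      then show ?thesis using j two_le_n by (simp add: attach_diagonal_diagonal)
    next
      case False
      then have "j - 1 \<in> {j \<in> {1..n - 1}. odd (b 1 j + D 2)}" using j by (auto simp: attach_diagonal_above)
      moreover have "j = Suc (j - 1)" using False j by simp
      ultimately show ?thesis by blast
    qed
  next
    fix j assume "j \<in> ?L \<union> ?R"
    then show "j \<in> {j \<in> {1..n}. odd (attach b 1 j)}"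
      using two_le_n by (auto simp: attach_diagonal_diagonal attach_diagonal_above)
  qed
  moreover have "card (?L \<union> ?R) = card ?L + card ?R" by (rule card_Un_disjoint) auto
  moreover have "card ?R = card {j \<in> {1..n - 1}. odd (b 1 j + D 2)}" by (rule card_image) auto
  ultimately show ?thesis by simp
qed

lemma patterns_with_eq_diagonal_patterns:
  assumes forced: "\<And>a i. is_pattern (n - 1) n c a \<Longrightarrow> a n n = D n \<Longrightarrow> card {j \<in> {1..n}. odd (a 1 j)} = p
      \<Longrightarrow> 1 \<le> i \<Longrightarrow> i \<le> n \<Longrightarrow> a i i = D i"
  shows "patterns_with (n - 1) n c p [D n] =
    {a \<in> diagonal_patterns D c n. card {j \<in> {1..n}. odd (a 1 j)} = p}"
  unfolding patterns_with_singleton[of "n - 1" c p "D n", unfolded index_arith] diagonal_patterns_def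
proof (intro equalityI subsetI)
  fix a assume "a \<in> {a. is_pattern (n - 1) n c a \<and> a n n = D n \<and> card {j \<in> {1..n}. odd (a 1 j)} = p}"
  then show "a \<in> {a \<in> {a. is_pattern (n - 1) n c a \<and> (\<forall>i. 1 \<le> i \<and> i \<le> n \<longrightarrow> a i i = D i)}.
      card {j \<in> {1..n}. odd (a 1 j)} = p}"
    using forced[of a] by blast
qed (use two_le_n in auto)

lemma pattern_weight_attach:
  fixes q :: "'a::field"
  assumes q: "q \<noteq> 0" and b: "b \<in> stripped_patterns"
  shows "pattern_weight q (n - 1) n (attach b) = (-1) ^ card {i \<in> {2..n}. D i < 0}
    * q powi (\<Sum>i = 1..n. D i + D 2 * int (n - i)) * pattern_weight q (n - 2) (n - 1) b"
proof -
  let ?N = "card {i \<in> {2..n}. D i < 0}" and ?E = "\<Sum>i = 1..n. D i + D 2 * int (n - i)"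
  have "pattern_weight q (n - 1) n (attach b) = of_int ((-1) ^ (?N + card (inversions (n - 2) (n - 1) b)))
      * q powi (pattern_norm (n - 2) (n - 1) b + ?E)"
    unfolding pattern_weight_def pattern_sgn_def card_inversions_attach[OF b] pattern_norm_attach ..
  also have "\<dots> = (-1) ^ ?N * q powi ?E * pattern_weight q (n - 2) (n - 1) b"
    unfolding pattern_weight_def pattern_sgn_def using q by (simp add: power_add power_int_add)
  finally show ?thesis .
qed

lemma Fq_eq_scaled_Gq:
  fixes q :: "'a::field"
  assumes q: "q \<noteq> 0"
    and forced: "\<And>a i. is_pattern (n - 1) n c a \<Longrightarrow> a n n = D n \<Longrightarrow> card {j \<in> {1..n}. odd (a 1 j)} = p
      \<Longrightarrow> 1 \<le> i \<Longrightarrow> i \<le> n \<Longrightarrow> a i i = D i"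
    and parity: "\<And>b :: nat \<Rightarrow> nat \<Rightarrow> int.
      (if odd (D 1) then 1 else 0) + card {j \<in> {1..n - 1}. odd (b 1 j + D 2)} = p
        \<longleftrightarrow> card {j \<in> {1..n - 1}. odd (b 1 j)} = p'"
  shows "Fq q (n - 1) n c p [D n] = (-1) ^ card {i \<in> {2..n}. D i < 0}
    * q powi ((\<Sum>i = 1..n. D i + D 2 * int (n - i)) - D n) * Gq q (n - 1) (c - D 2) p'"
proof -
  let ?N = "card {i \<in> {2..n}. D i < 0}" and ?E = "\<Sum>i = 1..n. D i + D 2 * int (n - i)"
    and ?G = "Gq q (n - 1) (c - D 2) p'"
  have "patterns_with (n - 1) n c p [D n] =
      {a \<in> diagonal_patterns D c n. card {j \<in> {1..n}. odd (a 1 j)} = p}"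
    by (rule patterns_with_eq_diagonal_patterns) (rule forced)
  then have "Fq q (n - 1) n c p [D n] = q powi (- D n) *
      sum (pattern_weight q (n - 1) n) {a \<in> diagonal_patterns D c n. card {j \<in> {1..n}. odd (a 1 j)} = p}"
    using Fq_singleton[of q "n - 1" c p "D n", unfolded index_arith] by simp
  also have "sum (pattern_weight q (n - 1) n) {a \<in> diagonal_patterns D c n. card {j \<in> {1..n}. odd (a 1 j)} = p}
      = (\<Sum>b\<in>{b \<in> stripped_patterns. card {j \<in> {1..n - 1}. odd (b 1 j)} = p'}.
          (-1) ^ ?N * q powi ?E * pattern_weight q (n - 2) (n - 1) b)"
    unfolding sum_diagonal_patterns_eq card_odd_attach parity
    by (rule sum.cong[OF refl], rule pattern_weight_attach[OF q]) simp
  also have "\<dots> = (-1) ^ ?N * q powi ?E * ?G"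
    unfolding Gq_Suc_eq_sum_bottom_bounded[OF q, of "n - 2", unfolded index_arith] sum_distrib_left ..
  also have "q powi (- D n) * ((-1) ^ ?N * q powi ?E * ?G) = (-1) ^ ?N * (q powi ?E * q powi (- D n)) * ?G"
    by (simp only: ac_simps)
  also have "q powi ?E * q powi (- D n) = q powi (?E - D n)"
    using power_int_add[of q ?E "- D n"] q by simp
  finally show ?thesis .
qed

end

section \<open>The four boundary values\<close>

text \<open>Twice the exponent produced by \<open>Fq_eq_scaled_Gq\<close> for an affine diagonal \<open>D i = u + x i\<close>
  with \<open>D 2 = y\<close>.\<close>

lemma double_sum_affine_exponent:
  "2 * ((\<Sum>i = 1..n. (u + x * int i) + y * int (n - i)) - (u + x * int n))
    = (int n - 1) * (2 * u + (x + y) * int n)"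
proof -
  let ?S = "\<Sum>i = 1..n. int i" and ?R = "\<Sum>i = 1..n. int (n - i)"
  have S: "2 * ?S = int n * (int n + 1)"
    using double_gauss_sum_from_Suc_0[of n] by simp
  have "?R = int n * int n - ?S"
    by (simp add: of_nat_diff sum_subtractf)
  then have R: "2 * ?R = int n * (int n - 1)"
    using S by (simp add: algebra_simps)
  have "(\<Sum>i = 1..n. (u + x * int i) + y * int (n - i)) = int n * u + x * ?S + y * ?R"
    by (simp add: sum.distrib sum_distrib_left)
  then have "2 * ((\<Sum>i = 1..n. (u + x * int i) + y * int (n - i)) - (u + x * int n))
      = 2 * int n * u + x * (2 * ?S) + y * (2 * ?R) - 2 * u - 2 * x * int n"
    by (simp add: algebra_simps)
  also have "\<dots> = (int n - 1) * (2 * u + (x + y) * int n)"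
    unfolding S R by (simp add: algebra_simps)
  finally show ?thesis .
qed

lemma card_filter_atLeastAtMost_eq_iff:
  "card {j \<in> {1..m}. P j} = m \<longleftrightarrow> (\<forall>j \<in> {1..m}. P j)"
proof
  assume "card {j \<in> {1..m}. P j} = m"
  then have "{j \<in> {1..m}. P j} = {1..m}" by (intro card_subset_eq) auto
  then show "\<forall>j \<in> {1..m}. P j" by blast
next
  assume "\<forall>j \<in> {1..m}. P j"
  then have "{j \<in> {1..m}. P j} = {1..m}" by blast
  then show "card {j \<in> {1..m}. P j} = m" by simp
qed

lemma Fq_bottom_zero:
  fixes q :: "'a::field"
  assumes q: "q \<noteq> 0" and n: "2 \<le> n" and c: "0 \<le> c"
  shows "Fq q (n - 1) n c p [0] = Gq q (n - 1) c p"
proof -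
  interpret diagonal_strip "\<lambda>_. 0" c n
    using n c by unfold_locales (auto simp: interlaces_def)
  have forced: "a i i = 0"
    if "is_pattern (n - 1) n c a" "a n n = 0" "card {j \<in> {1..n}. odd (a 1 j)} = p" "1 \<le> i" "i \<le> n" for a i
    using diagonal_nonneg_mono[OF that(1), of i n] that by simp
  have "Fq q (n - 1) n c p [0]
      = (-1) ^ card {i \<in> {2..n}. (0::int) < 0} * q powi ((\<Sum>i = 1..n. 0 + 0 * int (n - i)) - 0)
        * Gq q (n - 1) (c - 0) p"
    by (rule Fq_eq_scaled_Gq[OF q]) (simp_all add: forced)
  then show ?thesis by simp
qed

lemma Fq_bottom_minus_n:
  fixes q :: "'a::field"
  assumes q: "q \<noteq> 0" and n: "2 \<le> n" and c: "0 \<le> c" and p: "1 \<le> p"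
  shows "Fq q (n - 1) n c p [- int n] =
    (-1) ^ (n - 1) * q powi (- (3 * int n * (int n - 1) div 2)) * Gq q (n - 1) (c + 2) (p - 1)"
proof -
  interpret diagonal_strip "\<lambda>i. - int i" c n
    using n c by unfold_locales (auto simp: interlaces_def)
  have forced: "a i i = - int i"
    if P: "is_pattern (n - 1) n c a" and "a n n = - int n" "card {j \<in> {1..n}. odd (a 1 j)} = p"
      and "1 \<le> i" "i \<le> n"
    for a i
    using diagonal_neg_decreasing[OF P, of i n] diagonal_neg_decreasing[OF P, of 1 i] n that by auto
  let ?E = "(\<Sum>i = 1..n. - int i + - int 2 * int (n - i)) - - int n"
  have "3 * int n * (int n - 1) = 2 * - ?E"
    using double_sum_affine_exponent[of 0 "-1" "-2" n] by (simp add: algebra_simps)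
  then have "?E = - (3 * int n * (int n - 1) div 2)" by simp
  moreover have "{i \<in> {2..n}. - int i < 0} = {2..n}" by auto
  moreover have "Fq q (n - 1) n c p [- int n]
      = (-1) ^ card {i \<in> {2..n}. - int i < 0} * q powi ?E * Gq q (n - 1) (c - - int 2) (p - 1)"
    by (rule Fq_eq_scaled_Gq[OF q]) (simp add: forced, use p in auto)
  ultimately show ?thesis by simp
qed

lemma Fq_bottom_one:
  fixes q :: "'a::field"
  assumes q: "q \<noteq> 0" and n: "2 \<le> n" and c: "0 \<le> c"
  shows "Fq q (n - 1) n c n [1] = q powi ((int n + 2) * (int n - 1) div 2) * Gq q (n - 1) (c - 1) 0"
proof -
  interpret diagonal_strip "\<lambda>_. 1" c n
    using n c by unfold_locales (auto simp: interlaces_def)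
  have forced: "a i i = 1"
    if P: "is_pattern (n - 1) n c a" and "a n n = 1" "card {j \<in> {1..n}. odd (a 1 j)} = n"
      and "1 \<le> i" "i \<le> n"
    for a i
  proof -
    have "odd (a 1 1)" using card_filter_atLeastAtMost_eq_iff[THEN iffD1, OF that(3)] n by auto
    moreover have "0 \<le> a 1 1" "a 1 1 \<le> a i i" "a i i \<le> 1"
      using diagonal_nonneg_mono[OF P, of 1 i] diagonal_nonneg_mono[OF P, of i n] that by auto
    ultimately show ?thesis by presburger
  qed
  have parity: "(if odd (1::int) then 1 else 0) + card {j \<in> {1..n - 1}. odd (b 1 j + 1)} = n
      \<longleftrightarrow> card {j \<in> {1..n - 1}. odd (b 1 j)} = 0" for b :: "nat \<Rightarrow> nat \<Rightarrow> int"
  proof -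
    have "(if odd (1::int) then 1 else 0) + card {j \<in> {1..n - 1}. odd (b 1 j + 1)} = n
        \<longleftrightarrow> card {j \<in> {1..n - 1}. odd (b 1 j + 1)} = n - 1"
      using n by auto
    also have "\<dots> \<longleftrightarrow> card {j \<in> {1..n - 1}. odd (b 1 j)} = 0"
      unfolding card_filter_atLeastAtMost_eq_iff by auto
    finally show ?thesis .
  qed
  let ?E = "(\<Sum>i = 1..n. 1 + 1 * int (n - i)) - 1"
  have "(int n + 2) * (int n - 1) = 2 * ?E"
    using double_sum_affine_exponent[of 1 0 1 n] by (simp add: algebra_simps)
  then have "?E = (int n + 2) * (int n - 1) div 2" by simp
  moreover have "Fq q (n - 1) n c n [1]
      = (-1) ^ card {i \<in> {2..n}. (1::int) < 0} * q powi ?E * Gq q (n - 1) (c - 1) 0"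
    by (rule Fq_eq_scaled_Gq[OF q]) (simp add: forced, rule parity)
  ultimately show ?thesis by simp
qed

lemma Fq_bottom_minus_Suc_n:
  fixes q :: "'a::field"
  assumes q: "q \<noteq> 0" and n: "2 \<le> n" and c: "0 \<le> c"
  shows "Fq q (n - 1) n c 0 [- int n - 1] =
    (-1) ^ (n - 1) * q powi (- ((int n - 1) * (2 * int n + 1))) * Gq q (n - 1) (c + 3) (n - 1)"
proof -
  interpret diagonal_strip "\<lambda>i. - int i - 1" c n
    using n c by unfold_locales (auto simp: interlaces_def)
  have forced: "a i i = - int i - 1"
    if P: "is_pattern (n - 1) n c a" and "a n n = - int n - 1" "card {j \<in> {1..n}. odd (a 1 j)} = 0"
      and "1 \<le> i" "i \<le> n"
    for a i
  proof -
    have "even (a 1 1)" using that(3) n by auto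
    moreover have "a 1 1 < 0" "- 2 \<le> a 1 1"
      using diagonal_neg_decreasing[OF P, of 1 n] that n by auto
    ultimately have "a 1 1 = - 2" by presburger
    then show ?thesis
      using diagonal_neg_decreasing[OF P, of i n] diagonal_neg_decreasing[OF P, of 1 i] that by auto
  qed
  have parity: "(if odd (- int 1 - 1) then 1 else 0) + card {j \<in> {1..n - 1}. odd (b 1 j + (- int 2 - 1))} = 0
      \<longleftrightarrow> card {j \<in> {1..n - 1}. odd (b 1 j)} = n - 1" for b :: "nat \<Rightarrow> nat \<Rightarrow> int"
  proof -
    have "\<And>x :: int. odd (x + (- int 2 - 1)) \<longleftrightarrow> even x" by presburger
    then show ?thesis unfolding card_filter_atLeastAtMost_eq_iff by auto
  qed
  let ?E = "(\<Sum>i = 1..n. (- int i - 1) + (- int 2 - 1) * int (n - i)) - (- int n - 1)"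
  have "2 * ?E = 2 * - ((int n - 1) * (2 * int n + 1))"
    using double_sum_affine_exponent[of "-1" "-1" "-3" n] by (simp add: algebra_simps)
  then have "?E = - ((int n - 1) * (2 * int n + 1))" by simp
  moreover have "Fq q (n - 1) n c 0 [- int n - 1]
      = (-1) ^ card {i \<in> {2..n}. - int i - 1 < 0} * q powi ?E * Gq q (n - 1) (c - (- int 2 - 1)) (n - 1)"
    by (rule Fq_eq_scaled_Gq[OF q]) (simp add: forced, rule parity)
  moreover have "{i \<in> {2..n}. - int i - 1 < 0} = {2..n}" by auto
  ultimately show ?thesis by simp
qed

theorem lemma21:
  fixes q :: "'a::field" and n p :: nat and c :: int
  assumes "q \<noteq> 0" and "n \<ge> 2" and "c \<ge> 0" and "p \<le> n"
  shows "(p \<noteq> n \<longrightarrow> Fq q (n - 1) n c p [0] = Gq q (n - 1) c p)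
    \<and> (p \<noteq> 0 \<longrightarrow> Fq q (n - 1) n c p [- int n] =
          (-1) ^ (n - 1) * q powi (- (3 * int n * (int n - 1) div 2)) * Gq q (n - 1) (c + 2) (p - 1))
    \<and> Fq q (n - 1) n c n [1] = q powi ((int n + 2) * (int n - 1) div 2) * Gq q (n - 1) (c - 1) 0
    \<and> Fq q (n - 1) n c 0 [- int n - 1] =
          (-1) ^ (n - 1) * q powi (- ((int n - 1) * (2 * int n + 1))) * Gq q (n - 1) (c + 3) (n - 1)"
  using Fq_bottom_zero[OF assms(1-3)] Fq_bottom_minus_n[OF assms(1-3)]
    Fq_bottom_one[OF assms(1-3)] Fq_bottom_minus_Suc_n[OF assms(1-3)]
  by auto

end
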